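(* Let $G=(V,E)$ be a connected almost bipartite permutation graph that contains a hole, let $C$ be a shortest hole of $G$, $m=|C|$, and let $c_0,c_1,\dots,c_{m-1}$ be the vertices of $C$ in cyclic order, with indices taken modulo $m$. Then for every vertex $v\in V$ either $N(v)\cap C=\{c_i\}$ for some $i\in\{0,\dots,m-1\}$, or $N(v)\cap C=\{c_i,c_{i+2}\}$ for some $i\in\{0,\dots,m-1\}$.
   Context: All graphs are finite, simple, undirected; $N(v)$ denotes the (open) neighborhood of $v$. A hole is an induced cycle on at least five vertices. $K_3$ is the triangle and $C_k$ the cycle on $k$ vertices. $T_2$ is the tree on 7 vertices obtained from the claw $K_{1,3}$ by subdividing each of its three edges once. $X_2$ is the 7-vertex graph obtained from a 4-cycle by attaching one new pendant vertex to each of three of its four vertices. $X_3$ is the 7-vertex graph obtained from the domino (two 4-cycles sharing exactly one edge) by attaching one new pendant vertex to one endpoint of the shared edge. A graph is an almost bipartite permutation graph if it contains none of $T_2, X_2, X_3, K_3, C_5,\dots,C_9$ as an induced subgraph. *)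

theory Defs
  imports Main
begin

definition simple_graph :: "'a set \<Rightarrow> ('a \<Rightarrow> 'a \<Rightarrow> bool) \<Rightarrow> bool" where
  "simple_graph V E \<longleftrightarrow> finite V \<and> (\<forall>x y. E x y \<longrightarrow> x \<in> V \<and> y \<in> V)
     \<and> (\<forall>x y. E x y \<longrightarrow> E y x) \<and> (\<forall>x. \<not> E x x)"

definition connected_graph :: "'a set \<Rightarrow> ('a \<Rightarrow> 'a \<Rightarrow> bool) \<Rightarrow> bool" where
  "connected_graph V E \<longleftrightarrow> (\<forall>x\<in>V. \<forall>y\<in>V. E\<^sup>*\<^sup>* x y)"

definition nbhd :: "('a \<Rightarrow> 'a \<Rightarrow> bool) \<Rightarrow> 'a \<Rightarrow> 'a set" where
  "nbhd E v = {u. E v u}"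

definition edges_rel :: "(nat \<times> nat) list \<Rightarrow> nat \<Rightarrow> nat \<Rightarrow> bool" where
  "edges_rel es i j \<longleftrightarrow> (i, j) \<in> set es \<or> (j, i) \<in> set es"

definition has_induced :: "'a set \<Rightarrow> ('a \<Rightarrow> 'a \<Rightarrow> bool) \<Rightarrow> nat \<Rightarrow> (nat \<Rightarrow> nat \<Rightarrow> bool) \<Rightarrow> bool" where
  "has_induced V E n H \<longleftrightarrow> (\<exists>f. inj_on f {0..<n} \<and> f ` {0..<n} \<subseteq> V \<and>
     (\<forall>i<n. \<forall>j<n. E (f i) (f j) \<longleftrightarrow> H i j))"

definition K3_rel :: "nat \<Rightarrow> nat \<Rightarrow> bool" where
  "K3_rel = edges_rel [(0,1),(1,2),(0,2)]"

definition cycle_rel :: "nat \<Rightarrow> nat \<Rightarrow> nat \<Rightarrow> bool" where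
  "cycle_rel k i j \<longleftrightarrow> j = Suc i mod k \<or> i = Suc j mod k"

text \<open>T2: claw with centre 0 and leaves 1,2,3, each edge subdivided (4,5,6 the new ends).\<close>
definition T2_rel :: "nat \<Rightarrow> nat \<Rightarrow> bool" where
  "T2_rel = edges_rel [(0,1),(0,2),(0,3),(1,4),(2,5),(3,6)]"

text \<open>X2: 4-cycle 0-1-2-3-0 with pendants 4,5,6 at 0,1,2.\<close>
definition X2_rel :: "nat \<Rightarrow> nat \<Rightarrow> bool" where
  "X2_rel = edges_rel [(0,1),(1,2),(2,3),(3,0),(4,0),(5,1),(6,2)]"

text \<open>X3: domino with squares 0-1-4-3 and 1-2-5-4 sharing edge 1-4, pendant 6 at 1.\<close>
definition X3_rel :: "nat \<Rightarrow> nat \<Rightarrow> bool" where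
  "X3_rel = edges_rel [(0,1),(1,2),(3,4),(4,5),(0,3),(1,4),(2,5),(6,1)]"

definition almost_bipartite_permutation :: "'a set \<Rightarrow> ('a \<Rightarrow> 'a \<Rightarrow> bool) \<Rightarrow> bool" where
  "almost_bipartite_permutation V E \<longleftrightarrow>
     \<not> has_induced V E 7 T2_rel \<and> \<not> has_induced V E 7 X2_rel \<and>
     \<not> has_induced V E 7 X3_rel \<and> \<not> has_induced V E 3 K3_rel \<and>
     (\<forall>k. 5 \<le> k \<and> k \<le> 9 \<longrightarrow> \<not> has_induced V E k (cycle_rel k))"

definition is_hole :: "'a set \<Rightarrow> ('a \<Rightarrow> 'a \<Rightarrow> bool) \<Rightarrow> 'a list \<Rightarrow> bool" where
  "is_hole V E cs \<longleftrightarrow> distinct cs \<and> set cs \<subseteq> V \<and> 5 \<le> length cs \<and>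
     (\<forall>i<length cs. \<forall>j<length cs. E (cs ! i) (cs ! j) \<longleftrightarrow> cycle_rel (length cs) i j)"

definition shortest_hole :: "'a set \<Rightarrow> ('a \<Rightarrow> 'a \<Rightarrow> bool) \<Rightarrow> 'a list \<Rightarrow> bool" where
  "shortest_hole V E cs \<longleftrightarrow> is_hole V E cs \<and> (\<forall>ds. is_hole V E ds \<longrightarrow> length cs \<le> length ds)"

end

theory Submission
  imports Defs
begin

(* Excluding C5,...,C9 forces the shortest hole C to have m >= 10 vertices.  If v is off C
   and c_(i+d) is the next neighbour of v after c_i along C, then d is neither 1 nor m - 1
   (no triangles), and 3 <= d <= m - 3 is impossible because v c_i ... c_(i+d) would be a
   hole shorter than C; so d is 2, m - 2 or m.  Three neighbours c_i, c_(i+2), c_(i+4)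
   would force a fourth one c_(i+6) and an induced X3.  Finally, a vertex without
   neighbours on C would, by connectivity, yield an edge u w with N(w) disjoint from C and
   N(u) meeting C, and u, w together with C induce T2 or X2. *)

lemma all_less_3: "(\<forall>i<(3::nat). P i) \<longleftrightarrow> P 0 \<and> P 1 \<and> P 2"
  by (simp add: numeral_eq_Suc All_less_Suc conj_ac)

lemma all_less_7: "(\<forall>i<(7::nat). P i) \<longleftrightarrow> P 0 \<and> P 1 \<and> P 2 \<and> P 3 \<and> P 4 \<and> P 5 \<and> P 6"
  by (simp add: numeral_eq_Suc All_less_Suc conj_ac)

lemma has_induced_of_list:
  assumes "length xs = n" "distinct xs" "set xs \<subseteq> V"
    and "\<forall>i<n. \<forall>j<n. E (xs ! i) (xs ! j) \<longleftrightarrow> H i j"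
  shows "has_induced V E n H"
  unfolding has_induced_def using assms by (intro exI[of _ "nth xs"]) (auto simp: inj_on_nth)

lemma cycle_rel_0_Suc:
  assumes "q < n"
  shows "cycle_rel (Suc n) 0 (Suc q) \<longleftrightarrow> q = 0 \<or> Suc q = n"
  using assms by (auto simp: cycle_rel_def mod_Suc)

lemma cycle_rel_Suc_Suc:
  assumes "p < n" "q < n"
  shows "cycle_rel (Suc n) (Suc p) (Suc q) \<longleftrightarrow> q = Suc p \<or> p = Suc q"
  using assms by (auto simp: cycle_rel_def mod_Suc)

lemma cycle_rel_commute: "cycle_rel n p q \<longleftrightarrow> cycle_rel n q p"
  by (auto simp: cycle_rel_def)

lemma cycle_rel_irrefl: "1 < n \<Longrightarrow> p < n \<Longrightarrow> \<not> cycle_rel n p p"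
  by (auto simp: cycle_rel_def mod_Suc)

lemma is_hole_Cons_induced_path:
  assumes "simple_graph V E" "v \<in> V" "v \<notin> set ps" "distinct ps" "set ps \<subseteq> V" "4 \<le> length ps"
    and path: "\<forall>p<length ps. \<forall>q<length ps. E (ps ! p) (ps ! q) \<longleftrightarrow> q = Suc p \<or> p = Suc q"
    and ends: "\<forall>q<length ps. E v (ps ! q) \<longleftrightarrow> q = 0 \<or> Suc q = length ps"
  shows "is_hole V E (v # ps)"
proof -
  have sym: "E x y \<longleftrightarrow> E y x" and irrefl: "\<not> E x x" for x y
    using assms(1) by (auto simp: simple_graph_def)
  have "E ((v # ps) ! p) ((v # ps) ! q) \<longleftrightarrow> cycle_rel (Suc (length ps)) p q"
    if "p < Suc (length ps)" "q < Suc (length ps)" for p q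
  proof (cases p; cases q)
    assume "p = 0" "q = 0"
    moreover have "\<not> cycle_rel (Suc (length ps)) 0 0"
      using assms(6) by (intro cycle_rel_irrefl) auto
    ultimately show ?thesis
      using irrefl by simp
  next
    fix q' assume "p = 0" "q = Suc q'"
    then show ?thesis
      using that ends cycle_rel_0_Suc[of q' "length ps"] by simp
  next
    fix p' assume "p = Suc p'" "q = 0"
    then show ?thesis
      using that ends cycle_rel_0_Suc[of p' "length ps"] by (simp add: sym[of v] cycle_rel_commute)
  next
    fix p' q' assume "p = Suc p'" "q = Suc q'"
    then show ?thesis
      using that path cycle_rel_Suc_Suc[of p' "length ps" q'] by simp
  qed
  then show ?thesis
    using assms(2-6) by (auto simp: is_hole_def)
qed

lemma rtranclp_boundary_edge:
  assumes "r\<^sup>*\<^sup>* x y" "\<not> P x" "P y"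
  shows "\<exists>w u. r w u \<and> \<not> P w \<and> P u"
  using assms by (induction rule: converse_rtranclp_induct) blast+

locale shortest_hole_graph =
  fixes V :: "'a set" and E :: "'a \<Rightarrow> 'a \<Rightarrow> bool" and cs :: "'a list"
  assumes simple: "simple_graph V E"
    and abp: "almost_bipartite_permutation V E"
    and shortest: "shortest_hole V E cs"
begin

abbreviation m :: int where "m \<equiv> int (length cs)"

(* Integer indices let offsets such as k - 2 wrap around the hole instead of truncating. *)
definition c :: "int \<Rightarrow> 'a" where "c k = cs ! nat (k mod m)"

lemma E_sym: "E x y \<Longrightarrow> E y x"
  using simple by (simp add: simple_graph_def)

lemma E_irrefl: "\<not> E x x"
  using simple by (simp add: simple_graph_def)

lemma E_in_V: "E x y \<Longrightarrow> x \<in> V \<and> y \<in> V"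
  using simple by (simp add: simple_graph_def)

lemma is_hole_cs: "is_hole V E cs"
  using shortest by (simp add: shortest_hole_def)

lemma no_triangle: "E x y \<Longrightarrow> E y z \<Longrightarrow> E x z \<Longrightarrow> False"
proof -
  assume xyz: "E x y" "E y z" "E x z"
  have "has_induced V E 3 K3_rel"
    by (rule has_induced_of_list[of "[x, y, z]"])
      (use xyz E_in_V[OF xyz(1)] E_in_V[OF xyz(2)] E_sym[OF xyz(1)] E_sym[OF xyz(2)]
        E_sym[OF xyz(3)] E_irrefl in \<open>auto simp: all_less_3 K3_rel_def edges_rel_def\<close>)
  then show False
    using abp by (simp add: almost_bipartite_permutation_def)
qed

lemma length_ge_10: "10 \<le> length cs"
proof (rule ccontr)
  assume "\<not> 10 \<le> length cs"
  moreover have "5 \<le> length cs" "has_induced V E (length cs) (cycle_rel (length cs))"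
    using is_hole_cs by (auto simp: is_hole_def intro: has_induced_of_list)
  ultimately show False
    using abp by (simp add: almost_bipartite_permutation_def)
qed

lemma mod_m_bounds: "0 \<le> k mod m" "k mod m < m"
proof -
  have "0 < m"
    using length_ge_10 by linarith
  then show "0 \<le> k mod m" "k mod m < m"
    by simp_all
qed

lemma c_in_set: "c k \<in> set cs"
  using mod_m_bounds[of k] by (simp add: c_def nat_less_iff)

lemma c_in_V: "c k \<in> V"
  using c_in_set is_hole_cs by (auto simp: is_hole_def)

lemma c_of_nat: "j < length cs \<Longrightarrow> c (int j) = cs ! j"
  by (simp add: c_def nat_mod_distrib)

lemma c_eq_iff: "c a = c b \<longleftrightarrow> a mod m = b mod m"
proof -
  have "c a = c b \<longleftrightarrow> nat (a mod m) = nat (b mod m)"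
    using is_hole_cs mod_m_bounds[of a] mod_m_bounds[of b]
    by (simp add: c_def is_hole_def nth_eq_iff_index_eq nat_less_iff)
  also have "\<dots> \<longleftrightarrow> a mod m = b mod m"
    using mod_m_bounds[of a] mod_m_bounds[of b] by (simp add: nat_eq_iff)
  finally show ?thesis .
qed

lemma c_add_m: "c (a + m) = c a"
  by (simp add: c_eq_iff)

lemma c_adj_iff: "E (c a) (c b) \<longleftrightarrow> m dvd b - a - 1 \<or> m dvd a - b - 1"
proof -
  define p q where "p = nat (a mod m)" and "q = nat (b mod m)"
  have pq: "p < length cs" "q < length cs" "int p = a mod m" "int q = b mod m"
    using mod_m_bounds[of a] mod_m_bounds[of b] by (auto simp: p_def q_def nat_less_iff)
  have "E (c a) (c b) \<longleftrightarrow> cycle_rel (length cs) p q"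
    using is_hole_cs pq by (simp add: c_def is_hole_def flip: p_def q_def)
  also have "\<dots> \<longleftrightarrow> int q = int (Suc p mod length cs) \<or> int p = int (Suc q mod length cs)"
    by (simp add: cycle_rel_def)
  also have "\<dots> \<longleftrightarrow> b mod m = (a + 1) mod m \<or> a mod m = (b + 1) mod m"
    by (simp add: pq zmod_int mod_add_left_eq add.commute[of 1])
  also have "\<dots> \<longleftrightarrow> m dvd b - a - 1 \<or> m dvd a - b - 1"
    by (simp add: mod_eq_dvd_iff diff_diff_eq)
  finally show ?thesis .
qed

lemma m_dvd_small_iff: "\<bar>x\<bar> < m \<Longrightarrow> m dvd x \<longleftrightarrow> x = 0"
  using dvd_imp_le_int[of x m] length_ge_10 by auto

lemma c_adj_near: "\<bar>a - b\<bar> < m - 1 \<Longrightarrow> E (c a) (c b) \<longleftrightarrow> \<bar>a - b\<bar> = 1"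
  unfolding c_adj_iff by (subst m_dvd_small_iff, linarith)+ linarith

lemma c_eq_near: "\<bar>a - b\<bar> < m \<Longrightarrow> c a = c b \<longleftrightarrow> a = b"
  unfolding c_eq_iff mod_eq_dvd_iff by (subst m_dvd_small_iff, linarith) linarith

lemma c_adj_close: "\<bar>a - b\<bar> \<le> 8 \<Longrightarrow> E (c a) (c b) \<longleftrightarrow> \<bar>a - b\<bar> = 1"
  using length_ge_10 by (intro c_adj_near) linarith

lemma c_eq_close: "\<bar>a - b\<bar> \<le> 8 \<Longrightarrow> c a = c b \<longleftrightarrow> a = b"
  using length_ge_10 by (intro c_eq_near) linarith

lemma set_cs_eq: "set cs = (\<lambda>k. c (b + k)) ` {0..<m}"
proof
  show "(\<lambda>k. c (b + k)) ` {0..<m} \<subseteq> set cs"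
    using c_in_set by blast
  show "set cs \<subseteq> (\<lambda>k. c (b + k)) ` {0..<m}"
  proof
    fix x assume "x \<in> set cs"
    then obtain j where "j < length cs" "x = c (int j)"
      by (auto simp: in_set_conv_nth c_of_nat)
    moreover have "c (int j) = c (b + (int j - b) mod m)"
      by (simp add: c_eq_iff mod_add_right_eq)
    ultimately show "x \<in> (\<lambda>k. c (b + k)) ` {0..<m}"
      using mod_m_bounds by auto
  qed
qed

lemma in_set_cs_iff: "x \<in> set cs \<longleftrightarrow> (\<exists>k. x = c k)"
  using set_cs_eq[of 0] c_in_set by auto

definition hole_arc :: "int \<Rightarrow> nat \<Rightarrow> 'a list" where
  "hole_arc i n = map (\<lambda>k. c (i + int k)) [0..<Suc n]"

lemma length_hole_arc: "length (hole_arc i n) = Suc n"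
  by (simp add: hole_arc_def)

lemma nth_hole_arc: "q < Suc n \<Longrightarrow> hole_arc i n ! q = c (i + int q)"
  by (simp add: hole_arc_def nth_map_upt del: upt_Suc)

lemma set_hole_arc_subset: "set (hole_arc i n) \<subseteq> set cs"
  using c_in_set by (auto simp: hole_arc_def)

lemma distinct_hole_arc: "int n < m \<Longrightarrow> distinct (hole_arc i n)"
  unfolding hole_arc_def distinct_map by (auto simp: inj_on_def c_eq_near)

lemma hole_arc_adj_iff:
  assumes "int n < m - 1" "p < Suc n" "q < Suc n"
  shows "E (hole_arc i n ! p) (hole_arc i n ! q) \<longleftrightarrow> q = Suc p \<or> p = Suc q"
proof -
  have "E (c (i + int p)) (c (i + int q)) \<longleftrightarrow> \<bar>(i + int p) - (i + int q)\<bar> = 1"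
    using assms by (intro c_adj_near) linarith
  then show ?thesis
    using assms by (auto simp: nth_hole_arc)
qed

lemma hole_nbr_not_succ: "E v (c i) \<Longrightarrow> \<not> E v (c (i + 1))"
  using no_triangle[of v "c i" "c (i + 1)"] c_adj_close[of i "i + 1"] by auto

lemma is_hole_Cons_hole_arc:
  assumes v: "v \<notin> set cs" and ends: "E v (c i)" "E v (c (i + int n))" and n: "3 \<le> n" "int n < m - 1"
    and between: "\<And>k. 0 < k \<Longrightarrow> k < int n \<Longrightarrow> \<not> E v (c (i + k))"
  shows "is_hole V E (v # hole_arc i n)"
proof (rule is_hole_Cons_induced_path[OF simple])
  show "v \<in> V" "v \<notin> set (hole_arc i n)"
    using E_in_V[OF ends(1)] v set_hole_arc_subset by auto
  show "distinct (hole_arc i n)"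
    using n by (intro distinct_hole_arc) simp
  show "set (hole_arc i n) \<subseteq> V"
    using set_hole_arc_subset is_hole_cs by (auto simp: is_hole_def)
  show "4 \<le> length (hole_arc i n)"
    using n by (simp add: length_hole_arc)
  show "\<forall>p<length (hole_arc i n). \<forall>q<length (hole_arc i n).
      E (hole_arc i n ! p) (hole_arc i n ! q) \<longleftrightarrow> q = Suc p \<or> p = Suc q"
    using n by (auto simp: length_hole_arc hole_arc_adj_iff)
  show "\<forall>q<length (hole_arc i n). E v (hole_arc i n ! q) \<longleftrightarrow> q = 0 \<or> Suc q = length (hole_arc i n)"
  proof (intro allI impI)
    fix q assume "q < length (hole_arc i n)"
    then consider "q = 0" | "q = n" | "0 < q" "q < n"
      by (fastforce simp: length_hole_arc)
    then show "E v (hole_arc i n ! q) \<longleftrightarrow> q = 0 \<or> Suc q = length (hole_arc i n)"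
      by cases (use ends between[of "int q"] in \<open>auto simp: length_hole_arc nth_hole_arc\<close>)
  qed
qed

lemma hole_nbr_gap:
  assumes v: "v \<notin> set cs" and ends: "E v (c i)" "E v (c (i + d))" and d: "0 < d" "d < m"
    and between: "\<And>k. 0 < k \<Longrightarrow> k < d \<Longrightarrow> \<not> E v (c (i + k))"
  shows "d = 2 \<or> d = m - 2"
proof -
  have "d \<noteq> 1"
    using hole_nbr_not_succ ends by auto
  moreover have "d \<noteq> m - 1"
  proof
    assume "d = m - 1"
    then have "i + d = i - 1 + m"
      by simp
    then have "c (i + d) = c (i - 1)"
      by (simp only: c_add_m)
    then show False
      using hole_nbr_not_succ[of v "i - 1"] ends by simp
  qed
  moreover have "m - 2 \<le> d" if "3 \<le> d"
  proof -
    obtain n where n: "d = int n"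
      using d(1) nonneg_int_cases by (metis less_imp_le)
    have "is_hole V E (v # hole_arc i n)"
      using is_hole_Cons_hole_arc[OF v] ends between that d \<open>d \<noteq> m - 1\<close> n by simp
    then have "length cs \<le> length (v # hole_arc i n)"
      using shortest by (auto simp: shortest_hole_def)
    then show ?thesis
      using n by (simp add: length_hole_arc)
  qed
  ultimately show ?thesis
    using d by (cases "3 \<le> d") auto
qed

lemma next_hole_nbr:
  assumes v: "v \<notin> set cs" and e: "E v (c i)"
  obtains d where "d = 2 \<or> d = m - 2 \<or> d = m" "E v (c (i + d))"
    "\<And>k. 0 < k \<Longrightarrow> k < d \<Longrightarrow> \<not> E v (c (i + k))"
proof -
  define D where "D = {d \<in> {1..m}. E v (c (i + d))}"
  have D: "finite D" "m \<in> D"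
    using e length_ge_10 by (auto simp: D_def c_add_m intro: finite_subset[of _ "{1..m}"])
  define d where "d = Min D"
  have "d \<in> D"
    unfolding d_def using D by (intro Min_in) auto
  then have d: "0 < d" "d \<le> m" "E v (c (i + d))"
    by (auto simp: D_def)
  have between: "\<not> E v (c (i + k))" if "0 < k" "k < d" for k
    using Min_le[OF D(1), of k] that d(2) by (auto simp: d_def D_def)
  have "d = 2 \<or> d = m - 2 \<or> d = m"
    using hole_nbr_gap[OF v e d(3) d(1) _ between] d(2) by (cases "d = m") auto
  then show thesis
    using that d(3) between by blast
qed

lemma nbhd_inter_hole_eq:
  assumes "\<And>k. 0 \<le> k \<Longrightarrow> k < m \<Longrightarrow> E v (c (b + k)) \<longleftrightarrow> k \<in> K" "K \<subseteq> {0..<m}"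
  shows "nbhd E v \<inter> set cs = (\<lambda>k. c (b + k)) ` K"
  using assms unfolding set_cs_eq[of b] nbhd_def by auto

lemma hole_nbhd_on_hole: "nbhd E (c j) \<inter> set cs = {c (j - 1), c (j + 1)}"
proof -
  have "nbhd E (c j) \<inter> set cs = (\<lambda>k. c (j - 1 + k)) ` {0, 2}"
    by (rule nbhd_inter_hole_eq) (use length_ge_10 in \<open>auto simp: c_adj_near\<close>)
  then show ?thesis
    by (simp add: algebra_simps)
qed

lemma no_four_hole_nbrs_two_apart:
  assumes v: "v \<notin> set cs"
    and e: "E v (c i)" "E v (c (i + 2))" "E v (c (i + 4))" "E v (c (i + 6))"
  shows False
proof -
  have "\<not> E v (c (i + 1))" "\<not> E v (c (i + 3))"
    using hole_nbr_not_succ[OF e(1)] hole_nbr_not_succ[OF e(2)] by (simp_all add: add.assoc)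
  moreover have "v \<noteq> c k" "c k \<noteq> v" "E (c k) v \<longleftrightarrow> E v (c k)" for k
    using v c_in_set E_sym by blast+
  moreover have "v \<in> V"
    using E_in_V e(1) by blast
  ultimately have "has_induced V E 7 X3_rel"
    using e c_in_V
    by (intro has_induced_of_list[of "[c i, v, c (i + 4), c (i + 1), c (i + 2), c (i + 3), c (i + 6)]"])
      (simp_all add: all_less_7 X3_rel_def edges_rel_def c_adj_close c_eq_close E_irrefl)
  then show False
    using abp by (simp add: almost_bipartite_permutation_def)
qed

lemma hole_nbrs_two_apart:
  assumes v: "v \<notin> set cs" and e: "E v (c i)" "E v (c (i + 2))"
  shows "nbhd E v \<inter> set cs = {c i, c (i + 2)}"
proof -
  obtain d where d: "d = 2 \<or> d = m - 2 \<or> d = m" "E v (c (i + 2 + d))"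
    and between: "\<And>k. 0 < k \<Longrightarrow> k < d \<Longrightarrow> \<not> E v (c (i + 2 + k))"
    using next_hole_nbr[OF v e(2)] by blast
  have "c (i + 2 + (m - 2)) = c i"
    using c_add_m[of i] by simp
  then have "d \<le> m - 2"
    using between[of "m - 2"] e(1) length_ge_10 by force
  then consider "d = m - 2" | "d = 2"
    using d(1) length_ge_10 by force
  then show ?thesis
  proof cases
    case 1
    have "E v (c (i + k)) \<longleftrightarrow> k \<in> {0, 2}" if k: "0 \<le> k" "k < m" for k
    proof -
      consider "k = 0" | "k = 1" | "k = 2" | "2 < k"
        using k by linarith
      then show ?thesis
      proof cases
        case 4
        then show ?thesis
          using between[of "k - 2"] k 1 by simp
      qed (use e hole_nbr_not_succ[OF e(1)] in simp_all)
    qed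
    then have "nbhd E v \<inter> set cs = (\<lambda>k. c (i + k)) ` {0, 2}"
      using length_ge_10 by (intro nbhd_inter_hole_eq) auto
    then show ?thesis
      by simp
  next
    case 2
    then have e4: "E v (c (i + 4))"
      using d(2) by (simp add: add.assoc)
    obtain d' where d': "d' = 2 \<or> d' = m - 2 \<or> d' = m" "E v (c (i + 4 + d'))"
      and between': "\<And>k. 0 < k \<Longrightarrow> k < d' \<Longrightarrow> \<not> E v (c (i + 4 + k))"
      using next_hole_nbr[OF v e4] by blast
    have "c (i + 4 + (m - 4)) = c i"
      using c_add_m[of i] by simp
    then have "d' \<le> m - 4"
      using between'[of "m - 4"] e(1) length_ge_10 by force
    then have "E v (c (i + 6))"
      using d' length_ge_10 by (auto simp: add.assoc)
    then show ?thesis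
      using no_four_hole_nbrs_two_apart[OF v e e4] by blast
  qed
qed

lemma hole_nbhd_off_hole:
  assumes v: "v \<notin> set cs" and e: "E v (c i)"
  shows "(\<exists>a. nbhd E v \<inter> set cs = {c a}) \<or> (\<exists>a. nbhd E v \<inter> set cs = {c a, c (a + 2)})"
proof -
  obtain d where d: "d = 2 \<or> d = m - 2 \<or> d = m" "E v (c (i + d))"
    and between: "\<And>k. 0 < k \<Longrightarrow> k < d \<Longrightarrow> \<not> E v (c (i + k))"
    using next_hole_nbr[OF v e] by blast
  consider "d = m" | "d = m - 2" | "d = 2"
    using d(1) by blast
  then show ?thesis
  proof cases
    case 1
    have "E v (c (i + k)) \<longleftrightarrow> k \<in> {0}" if "0 \<le> k" "k < m" for k
      using e between[of k] 1 that by (cases "k = 0") auto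
    then have "nbhd E v \<inter> set cs = (\<lambda>k. c (i + k)) ` {0}"
      using length_ge_10 by (intro nbhd_inter_hole_eq) auto
    then show ?thesis
      by auto
  next
    case 2
    then have "i + d = i - 2 + m"
      by simp
    then have "E v (c (i - 2))"
      using d(2) by (simp only: c_add_m)
    then have "nbhd E v \<inter> set cs = {c (i - 2), c (i - 2 + 2)}"
      using hole_nbrs_two_apart[OF v] e by simp
    then show ?thesis
      by blast
  next
    case 3
    then show ?thesis
      using hole_nbrs_two_apart[OF v e] d(2) by auto
  qed
qed

lemma detached_nbr_off_hole:
  assumes uw: "E u w" and detached: "\<And>k. \<not> E w (c k)"
  shows "u \<notin> set cs" "w \<notin> set cs"
proof -
  show "u \<notin> set cs"
    using detached E_sym[OF uw] by (auto simp: in_set_cs_iff)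
  show "w \<notin> set cs"
  proof
    assume "w \<in> set cs"
    then obtain k where "w = c k"
      by (auto simp: in_set_cs_iff)
    then show False
      using detached[of "k + 1"] c_adj_close[of k "k + 1"] by simp
  qed
qed

lemma single_attachment_no_detached_nbr:
  assumes single: "nbhd E u \<inter> set cs = {c a}" and uw: "E u w" and detached: "\<And>k. \<not> E w (c k)"
  shows False
proof -
  have "E u (c k) \<longleftrightarrow> c k = c a" for k
    using single c_in_set[of k] unfolding nbhd_def by blast
  moreover have "c k \<noteq> u" "u \<noteq> c k" "c k \<noteq> w" "w \<noteq> c k"
    and "E (c k) u \<longleftrightarrow> E u (c k)" "E (c k) w \<longleftrightarrow> E w (c k)" for k
    using detached_nbr_off_hole[OF uw detached] c_in_set E_sym by blast+
  moreover have "u \<in> V" "w \<in> V" "E u w" "E w u" "u \<noteq> w" "w \<noteq> u"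
    using E_in_V[OF uw] E_sym[OF uw] uw E_irrefl by auto
  ultimately have "has_induced V E 7 T2_rel"
    using detached c_in_V
    by (intro has_induced_of_list[of "[c a, c (a + 1), c (a - 1), u, c (a + 2), c (a - 2), w]"])
      (simp_all add: all_less_7 T2_rel_def edges_rel_def c_adj_close c_eq_close E_irrefl)
  then show False
    using abp by (simp add: almost_bipartite_permutation_def)
qed

lemma pair_attachment_no_detached_nbr:
  assumes pair: "nbhd E u \<inter> set cs = {c a, c (a + 2)}" and uw: "E u w" and detached: "\<And>k. \<not> E w (c k)"
  shows False
proof -
  have "E u (c k) \<longleftrightarrow> c k = c a \<or> c k = c (a + 2)" for k
    using pair c_in_set[of k] unfolding nbhd_def by blast
  moreover have "c k \<noteq> u" "u \<noteq> c k" "c k \<noteq> w" "w \<noteq> c k"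
    and "E (c k) u \<longleftrightarrow> E u (c k)" "E (c k) w \<longleftrightarrow> E w (c k)" for k
    using detached_nbr_off_hole[OF uw detached] c_in_set E_sym by blast+
  moreover have "u \<in> V" "w \<in> V" "E u w" "E w u" "u \<noteq> w" "w \<noteq> u"
    using E_in_V[OF uw] E_sym[OF uw] uw E_irrefl by auto
  ultimately have "has_induced V E 7 X2_rel"
    using detached c_in_V
    by (intro has_induced_of_list[of "[c a, u, c (a + 2), c (a + 1), c (a - 1), w, c (a + 3)]"])
      (simp_all add: all_less_7 X2_rel_def edges_rel_def c_adj_close c_eq_close E_irrefl)
  then show False
    using abp by (simp add: almost_bipartite_permutation_def)
qed

lemma hole_nbr_exists:
  assumes "connected_graph V E" "v \<in> V"
  shows "\<exists>k. E v (c k)"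
proof (rule ccontr)
  let ?attached = "\<lambda>x. \<exists>k. E x (c k)"
  assume "\<not> ?attached v"
  moreover have "?attached (c 0)"
    using c_adj_close[of 0 1] by auto
  moreover have "E\<^sup>*\<^sup>* v (c 0)"
    using assms c_in_V by (auto simp: connected_graph_def)
  ultimately obtain w u where uw: "E w u" "\<not> ?attached w" "?attached u"
    using rtranclp_boundary_edge[of E v "c 0" ?attached] by blast
  then have wu: "E u w" "\<And>k. \<not> E w (c k)"
    using E_sym by blast+
  obtain i where "E u (c i)"
    using uw(3) by blast
  then show False
    using hole_nbhd_off_hole detached_nbr_off_hole[OF wu]
      single_attachment_no_detached_nbr[OF _ wu] pair_attachment_no_detached_nbr[OF _ wu] by blast
qed

lemma hole_nbhd_cases:
  assumes "connected_graph V E" "v \<in> V"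
  shows "(\<exists>a. nbhd E v \<inter> set cs = {c a}) \<or> (\<exists>a. nbhd E v \<inter> set cs = {c a, c (a + 2)})"
proof (cases "v \<in> set cs")
  case True
  then obtain j where "v = c j"
    by (auto simp: in_set_cs_iff)
  then have "nbhd E v \<inter> set cs = {c (j - 1), c (j - 1 + 2)}"
    using hole_nbhd_on_hole[of j] by (simp add: algebra_simps)
  then show ?thesis
    by blast
next
  case False
  then show ?thesis
    using hole_nbr_exists[OF assms] hole_nbhd_off_hole by blast
qed

lemma c_pair_as_nth: "\<exists>i<length cs. cs ! i = c a \<and> cs ! ((i + 2) mod length cs) = c (a + 2)"
proof -
  define i where "i = nat (a mod m)"
  have i: "i < length cs" "int i = a mod m"
    using mod_m_bounds[of a] by (auto simp: i_def nat_less_iff)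
  have "(i + 2) mod length cs < length cs"
    using length_ge_10 by (intro mod_less_divisor) linarith
  then have "cs ! ((i + 2) mod length cs) = c (int ((i + 2) mod length cs))"
    by (simp add: c_of_nat)
  also have "\<dots> = c (a + 2)"
    by (simp add: c_eq_iff zmod_int i(2) mod_add_left_eq add.commute[of 2])
  finally show ?thesis
    using i by (auto simp: c_def i_def)
qed

end

theorem proposition3p4:
  fixes V :: "'a set" and E :: "'a \<Rightarrow> 'a \<Rightarrow> bool" and cs :: "'a list"
  assumes "simple_graph V E"
    and "connected_graph V E"
    and "almost_bipartite_permutation V E"
    and "shortest_hole V E cs"
    and "v \<in> V"
  shows "(\<exists>i<length cs. nbhd E v \<inter> set cs = {cs ! i}) \<or>
         (\<exists>i<length cs. nbhd E v \<inter> set cs = {cs ! i, cs ! ((i + 2) mod length cs)})"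
proof -
  interpret shortest_hole_graph V E cs
    using assms(1,3,4) by unfold_locales
  show ?thesis
    using hole_nbhd_cases[OF assms(2,5)] c_pair_as_nth by metis
qed

end
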